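(* Let $L$ be a finite lattice, let $b\in L$, and let $A\subseteq L$ be a nonempty subset such that $b\not\le a$ for every $a\in A$. If $\tilde A$ is a maximal $b$-meet antichain of $A$, then $\nabla_A^b\varphi=\nabla_{\tilde A}^b\varphi$ for every $\varphi\in R(L)$.
   Context: $L$ is a finite lattice with order $\le$, meet $\wedge$ and maximum $\hat1$; $R(L)$ is the space of real-valued functions on $L$. For $A'\subseteq L$, $\bigwedge A'$ is the meet of $A'$, with $\bigwedge\emptyset=\hat1$. For a finite $A\subseteq L$ and $b\in L$, $\nabla_A^b\varphi=\sum_{A'\subseteq A}(-1)^{|A'|}\varphi(\bigwedge A'\wedge b)$ (for nonempty $A=\{a_1,\dots,a_n\}$ this is $\nabla_{a_1,\ldots,a_n}\varphi(b)$ with $\nabla_a\varphi(x)=\varphi(x)-\varphi(x\wedge a)$ iterated). An $n$-element subset $\{a_1,\dots,a_n\}$ is a $b$-meet antichain if $\{a_1\wedge b,\dots,a_n\wedge b\}$ is an $n$-element antichain; a singleton $\{a\}$ is a $b$-meet antichain only when $b\not\le a$. A maximal $b$-meet antichain of $A$ is a subset $\tilde A\subseteq A$ such that (i) $\tilde A$ is a $b$-meet antichain and (ii) for every $a\in A$ there is $a'\in\tilde A$ with $a\wedge b\le a'\wedge b$. *)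

theory Defs
  imports Complex_Main
begin

definition meet_set :: "'a::{lattice, order_top} set \<Rightarrow> 'a" where
  "meet_set S = Finite_Set.fold inf top S"

definition nabla :: "'a::{finite, lattice, order_top} set \<Rightarrow> 'a \<Rightarrow> ('a \<Rightarrow> real) \<Rightarrow> real" where
  "nabla A b \<phi> = (\<Sum>A'\<in>Pow A. (-1) ^ card A' * \<phi> (inf (meet_set A') b))"

definition meet_antichain :: "'a::{finite, lattice, order_top} \<Rightarrow> 'a set \<Rightarrow> bool" where
  "meet_antichain b S \<longleftrightarrow>
     S \<noteq> {} \<and>
     (card S = 1 \<longrightarrow> (\<forall>a\<in>S. \<not> b \<le> a)) \<and>
     inj_on (\<lambda>a. inf a b) S \<and>
     (\<forall>x\<in>S. \<forall>y\<in>S. x \<noteq> y \<longrightarrow> \<not> inf x b \<le> inf y b)"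

definition max_meet_antichain :: "'a::{finite, lattice, order_top} \<Rightarrow> 'a set \<Rightarrow> 'a set \<Rightarrow> bool" where
  "max_meet_antichain b A At \<longleftrightarrow>
     At \<subseteq> A \<and> meet_antichain b At \<and>
     (\<forall>a\<in>A. \<exists>a'\<in>At. inf a b \<le> inf a' b)"

end

theory Submission
  imports Defs
begin

text \<open>If \<open>a \<wedge> b \<le> a' \<wedge> b\<close> for some other \<open>a' \<in> A\<close>, then \<open>a\<close> can be removed from \<open>A\<close> without
  changing \<open>\<nabla>\<^sub>A\<^sup>b \<phi>\<close>: the terms whose index set contains \<open>a\<close> cancel in pairs \<open>A' \<leftrightarrow> A' \<triangle> {a'}\<close>,
  because adding \<open>a'\<close> to the meet does not change \<open>a \<wedge> \<And>A' \<wedge> b\<close>. Removing the elements of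
  \<open>A - \<tilde>A\<close> one at a time yields the claim; only the domination property of \<open>\<tilde>A\<close> is needed.\<close>

lemma meet_set_insert:
  fixes x :: "'a::{lattice, order_top}"
  assumes "finite S"
  shows "meet_set (insert x S) = inf x (meet_set S)"
  unfolding meet_set_def
  by (rule comp_fun_idem_on.fold_insert_idem[OF comp_fun_idem_inf[unfolded comp_fun_idem_def']])
    (use assms in auto)

lemma sum_Pow_insert_alternating:
  fixes g :: "'a set \<Rightarrow> real"
  assumes "finite A" and "a \<notin> A"
  shows "(\<Sum>B\<in>Pow (insert a A). (-1) ^ card B * g B)
       = (\<Sum>B\<in>Pow A. (-1) ^ card B * (g B - g (insert a B)))"
proof -
  have inj: "inj_on (insert a) (Pow A)"
    using assms(2) unfolding inj_on_def by (metis Pow_iff insert_ident subset_iff)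
  have "(\<Sum>B\<in>Pow (insert a A). (-1) ^ card B * g B)
      = (\<Sum>B\<in>Pow A. (-1) ^ card B * g B) + (\<Sum>B\<in>insert a ` Pow A. (-1) ^ card B * g B)"
    unfolding Pow_insert using assms by (intro sum.union_disjoint) auto
  also have "(\<Sum>B\<in>insert a ` Pow A. (-1) ^ card B * g B)
           = (\<Sum>B\<in>Pow A. (-1) ^ card (insert a B) * g (insert a B))"
    using inj by (simp add: sum.reindex)
  also have "\<dots> = (\<Sum>B\<in>Pow A. - ((-1) ^ card B * g (insert a B)))"
  proof (rule sum.cong)
    fix B assume "B \<in> Pow A"
    then have "finite B" "a \<notin> B" using assms finite_subset by auto
    then show "(-1) ^ card (insert a B) * g (insert a B) = - ((-1) ^ card B * g (insert a B))"
      by simp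
  qed simp
  finally show ?thesis by (simp add: sum_negf sum_subtractf right_diff_distrib)
qed

lemma sum_Pow_alternating_eq_0:
  fixes g :: "'a set \<Rightarrow> real"
  assumes "finite A" and "a \<in> A" and "\<And>B. B \<subseteq> A \<Longrightarrow> g (insert a B) = g B"
  shows "(\<Sum>B\<in>Pow A. (-1) ^ card B * g B) = 0"
proof -
  have "A = insert a (A - {a})" using assms(2) by auto
  then have "(\<Sum>B\<in>Pow A. (-1) ^ card B * g B)
           = (\<Sum>B\<in>Pow (A - {a}). (-1) ^ card B * (g B - g (insert a B)))"
    using sum_Pow_insert_alternating[of "A - {a}" a g] assms(1) by simp
  also have "\<dots> = 0" using assms(3) by (intro sum.neutral) (simp add: subset_iff)
  finally show ?thesis .
qed

lemma nabla_insert_dominated: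
  fixes b :: "'a::{finite, lattice, order_top}"
  assumes "a \<notin> A" and "a' \<in> A" and "inf a b \<le> inf a' b"
  shows "nabla (insert a A) b \<phi> = nabla A b \<phi>"
proof -
  define g where "g B = \<phi> (inf (inf a (meet_set B)) b)" for B
  have "nabla (insert a A) b \<phi>
      = (\<Sum>B\<in>Pow A. (-1) ^ card B * (\<phi> (inf (meet_set B) b) - g B))"
    unfolding nabla_def g_def
    using sum_Pow_insert_alternating[of A a "\<lambda>B. \<phi> (inf (meet_set B) b)"] assms(1)
    by (simp add: meet_set_insert)
  also have "\<dots> = nabla A b \<phi> - (\<Sum>B\<in>Pow A. (-1) ^ card B * g B)"
    unfolding nabla_def by (simp add: right_diff_distrib sum_subtractf)
  also have "(\<Sum>B\<in>Pow A. (-1) ^ card B * g B) = 0"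
  proof (rule sum_Pow_alternating_eq_0[OF _ assms(2)])
    fix B
    have "inf (inf a b) a' = inf a b" using assms(3) by (simp add: inf.absorb1 le_infE)
    then have "inf (inf a (inf a' (meet_set B))) b = inf (inf a (meet_set B)) b"
      by (metis inf.assoc inf.commute inf.left_commute)
    then show "g (insert a' B) = g B" by (simp add: g_def meet_set_insert)
  qed simp
  finally show ?thesis by simp
qed

lemma nabla_eq_if_dominated:
  fixes b :: "'a::{finite, lattice, order_top}"
  assumes "At \<subseteq> A" and "\<forall>a\<in>A. \<exists>a'\<in>At. inf a b \<le> inf a' b"
  shows "nabla A b \<phi> = nabla At b \<phi>"
proof -
  have "nabla (At \<union> D) b \<phi> = nabla At b \<phi>"
    if "D \<inter> At = {}" and "\<forall>a\<in>D. \<exists>a'\<in>At. inf a b \<le> inf a' b" for D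
    using finite[of D] that
  proof (induction D rule: finite_induct)
    case (insert a D)
    then obtain a' where "a' \<in> At" "inf a b \<le> inf a' b" by blast
    then have "nabla (insert a (At \<union> D)) b \<phi> = nabla (At \<union> D) b \<phi>"
      using insert.hyps(2) insert.prems(1) by (intro nabla_insert_dominated) auto
    with insert show ?case by simp
  qed simp
  moreover have "A = At \<union> (A - At)" using assms(1) by auto
  ultimately show ?thesis using assms(2) by (metis Diff_disjoint Diff_iff inf_commute)
qed

theorem lemma2p3:
  fixes b :: "'a::{finite, lattice, order_top}"
    and A At :: "'a set"
  assumes "A \<noteq> {}"
    and "\<forall>a\<in>A. \<not> b \<le> a"
    and "max_meet_antichain b A At"
  shows "\<forall>\<phi> :: 'a \<Rightarrow> real. nabla A b \<phi> = nabla At b \<phi>"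
  using assms(3) nabla_eq_if_dominated unfolding max_meet_antichain_def by blast

end
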